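(* Let $\bar u\in\mathbb{R}^n_{\ge0}$, $\mathcal{X}=[0,\bar u]$, and let $f:\mathcal{X}\to\mathbb{R}$ be nonnegative and DR-submodular. Let $\mathcal{P}\subseteq\mathcal{X}$ be a nonempty compact down-closed convex set, $x^*\in\arg\max_{x\in\mathcal{P}}f(x)$, $x\in\mathcal{P}$, $z\in\mathcal{P}$ with $z\le \bar u-x$, and $z^*:=x\vee x^*-x$. Then $$f(x\vee x^* )+f(x\wedge x^* )+f(z\vee z^* )+f(z\wedge z^* )\ge f(x^* ).$$
   Context: Vector inequalities are componentwise; $\vee,\wedge$ are coordinatewise max/min. A set $\mathcal{P}\subseteq[0,\bar u]$ is down-closed if $x\in\mathcal{P}$ and $0\le y\le x$ imply $y\in\mathcal{P}$. $f$ is DR-submodular if for all $a\le b$ in $\mathcal{X}$, $i\in[n]$, $k\ge0$ with $a+ke_i,b+ke_i\in\mathcal{X}$, $f(a+ke_i)-f(a)\ge f(b+ke_i)-f(b)$ ($e_i$ the $i$-th standard basis vector). *)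

theory Defs
  imports "HOL-Analysis.Analysis"
begin

text \<open>Vectors in R^n are modelled as real^'n; the order is componentwise and
sup/inf are coordinatewise max/min (library instances). axis i 1 is e_i.\<close>

definition DR_submodular_on :: "(real^'n) set \<Rightarrow> (real^'n \<Rightarrow> real) \<Rightarrow> bool" where
  "DR_submodular_on X f \<longleftrightarrow>
     (\<forall>a\<in>X. \<forall>b\<in>X. \<forall>i. \<forall>k::real. a \<le> b \<and> k \<ge> 0 \<and>
        a + k *\<^sub>R axis i 1 \<in> X \<and> b + k *\<^sub>R axis i 1 \<in> X \<longrightarrow>
        f (a + k *\<^sub>R axis i 1) - f a \<ge> f (b + k *\<^sub>R axis i 1) - f b)"

definition down_closed :: "(real^'n) set \<Rightarrow> bool" where
  "down_closed P \<longleftrightarrow> (\<forall>x\<in>P. \<forall>y. 0 \<le> y \<and> y \<le> x \<longrightarrow> y \<in> P)"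

end

theory Submission
  imports Defs
begin

text \<open>DR-submodularity, stated along coordinate axes, extends to arbitrary
nonnegative increments d: f(a + d) - f a \<ge> f(b + d) - f b whenever a \<le> b.
With z* = x \<squnion> x* - x we have (x \<sqinter> x*) + z* = x* and x + z* = x \<squnion> x*, so two such
diminishing-returns steps give
  f x* \<le> f(x \<sqinter> x*) + f z* - f 0   and   f z* \<le> f(x \<squnion> x*) + f(z \<squnion> z*) - f(x + z \<squnion> z*),
where x + z \<squnion> z* stays in the box because z \<le> u - x. Nonnegativity of f at 0,
at x + z \<squnion> z* and at z \<sqinter> z* finishes the estimate.\<close>

lemma DR_submodular_onD:
  assumes "DR_submodular_on X f" "a \<in> X" "b \<in> X" "a \<le> b" "0 \<le> k"
    "a + k *\<^sub>R axis i 1 \<in> X" "b + k *\<^sub>R axis i 1 \<in> X"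
  shows "f (a + k *\<^sub>R axis i 1) - f a \<ge> f (b + k *\<^sub>R axis i 1) - f b"
  using assms unfolding DR_submodular_on_def by blast

lemma DR_submodular_on_increment:
  fixes l u a b d :: "real^'n" and f :: "real^'n \<Rightarrow> real"
  assumes DR: "DR_submodular_on {l..u} f"
    and "l \<le> a" "a \<le> b" "0 \<le> d" "b + d \<le> u"
  shows "f (a + d) - f a \<ge> f (b + d) - f b"
proof -
  \<comment> \<open>d is added one coordinate at a time, each step being an axis-parallel increment\<close>
  define part where "part S = (\<chi> j. if j \<in> S then d $ j else 0)" for S :: "'n set"
  have coords: "l $ j \<le> a $ j" "a $ j \<le> b $ j" "0 \<le> d $ j" "b $ j + d $ j \<le> u $ j" for j
    using assms(2-5) by (simp_all add: less_eq_vec_def)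
  have in_box: "a + part S \<in> {l..u}" "b + part S \<in> {l..u}" for S
  proof -
    have part_bounds: "0 \<le> part S $ j \<and> part S $ j \<le> d $ j" for j
      using coords(3)[of j] by (simp add: part_def)
    have "l $ j \<le> (a + part S) $ j \<and> (a + part S) $ j \<le> u $ j \<and>
               l $ j \<le> (b + part S) $ j \<and> (b + part S) $ j \<le> u $ j" for j
      using coords[of j] part_bounds[of j] by auto
    then show "a + part S \<in> {l..u}" "b + part S \<in> {l..u}"
      by (simp_all add: less_eq_vec_def)
  qed
  have "f (a + part S) - f a \<ge> f (b + part S) - f b" if "finite S" for S
    using that
  proof (induction S rule: finite_induct)
    case empty
    have "part {} = 0" by (simp add: part_def vec_eq_iff)
    then show ?case by simp
  next
    case (insert i S)
    have step: "part (insert i S) = part S + d $ i *\<^sub>R axis i 1"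
      using insert.hyps(2) by (auto simp: part_def vec_eq_iff axis_def)
    have "f (a + part S + d $ i *\<^sub>R axis i 1) - f (a + part S)
             \<ge> f (b + part S + d $ i *\<^sub>R axis i 1) - f (b + part S)"
    proof (rule DR_submodular_onD[OF DR in_box[of S]])
      show "a + part S \<le> b + part S"
        using \<open>a \<le> b\<close> by simp
      show "a + part S + d $ i *\<^sub>R axis i 1 \<in> {l..u}" "b + part S + d $ i *\<^sub>R axis i 1 \<in> {l..u}"
        using in_box[of "insert i S"] by (simp_all only: step add.assoc)
    qed (rule coords(3))
    with insert.IH show ?case
      unfolding step add.assoc by linarith
  qed
  moreover have "part UNIV = d"
    by (simp add: part_def vec_eq_iff)
  ultimately show ?thesis
    by (metis finite)
qed

lemma DR_submodular_on_meet_bound: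
  fixes u x y :: "real^'n" and f :: "real^'n \<Rightarrow> real"
  assumes DR: "DR_submodular_on {0..u} f" and "0 \<le> x" "0 \<le> y" "y \<le> u"
  shows "f y \<le> f (inf x y) + f (sup x y - x) - f 0"
proof -
  have meet_plus: "inf x y + (sup x y - x) = y"
    by (simp add: vec_eq_iff inf_vec_def sup_vec_def inf_min sup_max min_def max_def)
  have "f (0 + (sup x y - x)) - f 0 \<ge> f (inf x y + (sup x y - x)) - f (inf x y)"
  proof (rule DR_submodular_on_increment[OF DR])
    show "0 \<le> inf x y"
      using assms(2,3) by (rule le_infI)
    show "inf x y + (sup x y - x) \<le> u"
      using assms(4) by (simp only: meet_plus)
  qed simp_all
  then show ?thesis
    by (simp add: meet_plus)
qed

lemma DR_submodular_on_join_bound: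
  fixes u x y z :: "real^'n" and f :: "real^'n \<Rightarrow> real"
  defines "w \<equiv> sup z (sup x y - x)"
  assumes DR: "DR_submodular_on {0..u} f" and "0 \<le> x" "x + w \<le> u"
  shows "f (sup x y - x) \<le> f (sup x y) + f w - f (x + w)"
proof -
  have join_plus: "sup x y + (w - (sup x y - x)) = x + w"
    by (simp add: algebra_simps)
  have "f ((sup x y - x) + (w - (sup x y - x))) - f (sup x y - x)
      \<ge> f (sup x y + (w - (sup x y - x))) - f (sup x y)"
  proof (rule DR_submodular_on_increment[OF DR])
    show "sup x y - x \<le> sup x y"
      using assms(3) by simp
    show "0 \<le> w - (sup x y - x)"
      by (simp add: w_def)
    show "sup x y + (w - (sup x y - x)) \<le> u"
      using assms(4) by (simp only: join_plus)
  qed simp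
  then show ?thesis
    by (simp add: join_plus)
qed

theorem claim1:
  fixes ubar :: "real^'n" and f :: "real^'n \<Rightarrow> real"
    and P :: "(real^'n) set" and x xstar z :: "real^'n"
  assumes "0 \<le> ubar"
    and "\<forall>y\<in>{0..ubar}. 0 \<le> f y"
    and "DR_submodular_on {0..ubar} f"
    and "P \<noteq> {}" and "P \<subseteq> {0..ubar}" and "compact P" and "down_closed P" and "convex P"
    and "xstar \<in> P" and "\<forall>y\<in>P. f y \<le> f xstar"
    and "x \<in> P" and "z \<in> P" and "z \<le> ubar - x"
  shows "f (sup x xstar) + f (inf x xstar) + f (sup z (sup x xstar - x)) + f (inf z (sup x xstar - x))
           \<ge> f xstar"
proof -
  define zstar where "zstar = sup x xstar - x"
  define w where "w = sup z zstar"
  have box: "0 \<le> x" "x \<le> ubar" "0 \<le> xstar" "xstar \<le> ubar" "0 \<le> z" "z \<le> ubar"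
    using assms(5,9,11,12) by auto
  have top_in_box: "x + w \<le> ubar"
    unfolding less_eq_vec_def
  proof
    fix i
    have "z $ i \<le> ubar $ i - x $ i" "x $ i \<le> ubar $ i" "xstar $ i \<le> ubar $ i"
      using assms(13) box by (simp_all add: less_eq_vec_def)
    then show "(x + w) $ i \<le> ubar $ i"
      by (simp add: w_def zstar_def sup_vec_def sup_max)
  qed
  have first: "f xstar \<le> f (inf x xstar) + f zstar - f 0"
    unfolding zstar_def using assms(3) box(1,3,4) by (rule DR_submodular_on_meet_bound)
  have second: "f zstar \<le> f (sup x xstar) + f w - f (x + w)"
    unfolding zstar_def w_def using assms(3) box(1) top_in_box[unfolded w_def zstar_def]
    by (rule DR_submodular_on_join_bound)
  have "0 \<le> f y" if "0 \<le> y" "y \<le> ubar" for y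
    using assms(2) that by simp
  moreover have "0 \<le> x + w" "0 \<le> inf z zstar" "inf z zstar \<le> ubar"
    using box(1,5,6) by (simp_all add: w_def zstar_def le_supI1 le_infI1)
  ultimately have "0 \<le> f 0" "0 \<le> f (x + w)" "0 \<le> f (inf z zstar)"
    using assms(1) top_in_box by simp_all
  with first second show ?thesis
    unfolding w_def zstar_def by linarith
qed

end
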